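(* Let $\Gamma$ be a finite connected $(G,2)$-distance-transitive graph of square-free order, where $G$ is soluble, and let $F$ be the Fitting subgroup of $G$. If $|F|$ is square-free, then $F=C_G(F)$ is cyclic, and either $\Gamma\cong \mathrm{K}_{m[b]}$ with $m\ge3$, $b\ge2$ and $mb$ square-free, or $F$ is semiregular on $V(\Gamma)$ with at most $2$ orbits.
   Context: For $G\le\mathrm{Aut}(\Gamma)$, $\Gamma$ is $(G,2)$-distance-transitive if its diameter is at least $2$, $G$ is vertex-transitive and $G_u$ is transitive on $\Gamma(u)$ and $\Gamma_2(u)$ for every vertex $u$. The Fitting subgroup is the subgroup generated by all nilpotent normal subgroups. $\mathrm{K}_{m[b]}$ is the complete multipartite graph with $m$ parts of size $b$. *)

theory Defs
  imports "HOL-Algebra.Algebra" "HOL-Computational_Algebra.Squarefree"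
begin

fun walk_n :: "('a \<Rightarrow> 'a \<Rightarrow> bool) \<Rightarrow> 'a set \<Rightarrow> nat \<Rightarrow> 'a \<Rightarrow> 'a \<Rightarrow> bool" where
  "walk_n E V 0 u v = (u \<in> V \<and> u = v)"
| "walk_n E V (Suc n) u v = (u \<in> V \<and> (\<exists>w\<in>V. E u w \<and> walk_n E V n w v))"

definition simple_graph :: "'a set \<Rightarrow> ('a \<Rightarrow> 'a \<Rightarrow> bool) \<Rightarrow> bool" where
  "simple_graph V E \<longleftrightarrow> (\<forall>x\<in>V. \<forall>y\<in>V. E x y \<longleftrightarrow> E y x) \<and> (\<forall>x\<in>V. \<not> E x x)"

definition connected_graph :: "'a set \<Rightarrow> ('a \<Rightarrow> 'a \<Rightarrow> bool) \<Rightarrow> bool" where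
  "connected_graph V E \<longleftrightarrow> V \<noteq> {} \<and> (\<forall>u\<in>V. \<forall>v\<in>V. \<exists>n. walk_n E V n u v)"

definition gdist :: "'a set \<Rightarrow> ('a \<Rightarrow> 'a \<Rightarrow> bool) \<Rightarrow> 'a \<Rightarrow> 'a \<Rightarrow> nat" where
  "gdist V E u v = (LEAST n. walk_n E V n u v)"

definition sphere :: "'a set \<Rightarrow> ('a \<Rightarrow> 'a \<Rightarrow> bool) \<Rightarrow> nat \<Rightarrow> 'a \<Rightarrow> 'a set" where
  "sphere V E i u = {v \<in> V. gdist V E u v = i}"

definition diameter_ge :: "'a set \<Rightarrow> ('a \<Rightarrow> 'a \<Rightarrow> bool) \<Rightarrow> nat \<Rightarrow> bool" where
  "diameter_ge V E d \<longleftrightarrow> (\<exists>u\<in>V. \<exists>v\<in>V. gdist V E u v \<ge> d)"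

definition Aut :: "'a set \<Rightarrow> ('a \<Rightarrow> 'a \<Rightarrow> bool) \<Rightarrow> ('a \<Rightarrow> 'a) set" where
  "Aut V E = {g \<in> Bij V. \<forall>x\<in>V. \<forall>y\<in>V. E (g x) (g y) \<longleftrightarrow> E x y}"

definition perm_group :: "'a set \<Rightarrow> ('a \<Rightarrow> 'a) set \<Rightarrow> ('a \<Rightarrow> 'a) monoid" where
  "perm_group V G = (BijGroup V)\<lparr>carrier := G\<rparr>"

definition stab_transitive_on :: "('a \<Rightarrow> 'a) set \<Rightarrow> 'a \<Rightarrow> 'a set \<Rightarrow> bool" where
  "stab_transitive_on G u S \<longleftrightarrow> (\<forall>x\<in>S. \<forall>y\<in>S. \<exists>g\<in>G. g u = u \<and> g x = y)"

definition vertex_transitive :: "'a set \<Rightarrow> ('a \<Rightarrow> 'a) set \<Rightarrow> bool" where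
  "vertex_transitive V G \<longleftrightarrow> (\<forall>x\<in>V. \<forall>y\<in>V. \<exists>g\<in>G. g x = y)"

definition two_distance_transitive :: "'a set \<Rightarrow> ('a \<Rightarrow> 'a \<Rightarrow> bool) \<Rightarrow> ('a \<Rightarrow> 'a) set \<Rightarrow> bool" where
  "two_distance_transitive V E G \<longleftrightarrow>
     subgroup G (BijGroup V) \<and> G \<subseteq> Aut V E \<and> diameter_ge V E 2 \<and> vertex_transitive V G \<and>
     (\<forall>u\<in>V. stab_transitive_on G u (sphere V E 1 u) \<and> stab_transitive_on G u (sphere V E 2 u))"

definition iso_complete_multipartite :: "'a set \<Rightarrow> ('a \<Rightarrow> 'a \<Rightarrow> bool) \<Rightarrow> nat \<Rightarrow> nat \<Rightarrow> bool" where
  "iso_complete_multipartite V E m b \<longleftrightarrow>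
     (\<exists>f. bij_betw f V ({0..<m} \<times> {0..<b}) \<and>
          (\<forall>x\<in>V. \<forall>y\<in>V. E x y \<longleftrightarrow> fst (f x) \<noteq> fst (f y)))"

definition commutator_subgroup :: "('g, 'b) monoid_scheme \<Rightarrow> 'g set \<Rightarrow> 'g set \<Rightarrow> 'g set" where
  "commutator_subgroup G H K = generate G
     {h \<otimes>\<^bsub>G\<^esub> k \<otimes>\<^bsub>G\<^esub> inv\<^bsub>G\<^esub> h \<otimes>\<^bsub>G\<^esub> inv\<^bsub>G\<^esub> k | h k. h \<in> H \<and> k \<in> K}"

fun lower_central :: "('g, 'b) monoid_scheme \<Rightarrow> nat \<Rightarrow> 'g set" where
  "lower_central G 0 = carrier G"
| "lower_central G (Suc n) = commutator_subgroup G (lower_central G n) (carrier G)"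

definition nilpotent_group :: "('g, 'b) monoid_scheme \<Rightarrow> bool" where
  "nilpotent_group G \<longleftrightarrow> group G \<and> (\<exists>n. lower_central G n = {\<one>\<^bsub>G\<^esub>})"

definition fitting_subgroup :: "('g, 'b) monoid_scheme \<Rightarrow> 'g set" where
  "fitting_subgroup G = generate G (\<Union>{N. N \<lhd> G \<and> nilpotent_group (G\<lparr>carrier := N\<rparr>)})"

definition centraliser :: "('g, 'b) monoid_scheme \<Rightarrow> 'g set \<Rightarrow> 'g set" where
  "centraliser G H = {g \<in> carrier G. \<forall>h\<in>H. g \<otimes>\<^bsub>G\<^esub> h = h \<otimes>\<^bsub>G\<^esub> g}"

definition cyclic_subgroup :: "('g, 'b) monoid_scheme \<Rightarrow> 'g set \<Rightarrow> bool" where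
  "cyclic_subgroup G H \<longleftrightarrow> (\<exists>g\<in>H. H = generate G {g})"

definition semiregular :: "'a set \<Rightarrow> ('a \<Rightarrow> 'a) set \<Rightarrow> bool" where
  "semiregular V H \<longleftrightarrow> (\<forall>v\<in>V. \<forall>h\<in>H. h v = v \<longrightarrow> h = \<one>\<^bsub>BijGroup V\<^esub>)"

definition perm_orbits :: "'a set \<Rightarrow> ('a \<Rightarrow> 'a) set \<Rightarrow> 'a set set" where
  "perm_orbits V H = (\<lambda>v. {h v | h. h \<in> H}) ` V"

end

theory Submission
  imports Defs
begin

(* A nilpotent group of squarefree order is abelian: a commutator c = [x, y] commuting with x
   and y has order dividing that of x, and x^(ord x / ord c) and c generate two commuting cyclic
   subgroups of order ord c meeting trivially, so (ord c)^2 divides the group order.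
   The same argument shows that the nilpotent normal subgroups generating the Fitting subgroup F
   commute with each other, so F is abelian of squarefree order, hence cyclic.
   If G is soluble then C_G(F) <= F: the last term of the derived series of C_G(F) not contained
   in F would be a normal subgroup of nilpotency class at most 2, hence contained in F.
   Each element of G acts on the cyclic group F as a power map, so G' <= F.  An element of F
   fixing v then fixes every g v, as g^-1 f g is a power of f, so F is semiregular.  An element g
   of the stabiliser of u maps w = h u to [g, h] w, so every vertex stabiliser preserves the
   F-orbits; by local transitivity all neighbours of a vertex lie in a single F-orbit, and
   connectivity leaves at most two F-orbits. *)

section \<open>Commuting elements and element orders\<close>

lemma (in group) inv_mult_cancel_left [simp]:
  "x \<in> carrier G \<Longrightarrow> y \<in> carrier G \<Longrightarrow> inv x \<otimes> (x \<otimes> y) = y"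
  "x \<in> carrier G \<Longrightarrow> y \<in> carrier G \<Longrightarrow> x \<otimes> (inv x \<otimes> y) = y"
  by (simp_all add: m_assoc[symmetric])

lemma (in group) inv_commute:
  assumes x: "x \<in> carrier G" and y: "y \<in> carrier G" and comm: "x \<otimes> y = y \<otimes> x"
  shows "inv x \<otimes> y = y \<otimes> inv x"
proof -
  have "inv x \<otimes> (x \<otimes> y) \<otimes> inv x = inv x \<otimes> (y \<otimes> x) \<otimes> inv x" using comm by simp
  then show ?thesis using x y by (simp add: m_assoc)
qed

lemma (in group) generate_commute:
  assumes a: "a \<in> carrier G" and S: "S \<subseteq> carrier G"
    and comm: "\<And>s. s \<in> S \<Longrightarrow> s \<otimes> a = a \<otimes> s" and g: "g \<in> generate G S"
  shows "g \<otimes> a = a \<otimes> g"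
  using g
proof (induction rule: generate.induct)
  case one
  then show ?case using a by simp
next
  case (incl h)
  then show ?case using comm by blast
next
  case (inv h)
  then have "h \<in> carrier G" and "h \<otimes> a = a \<otimes> h" using S comm by auto
  then show ?case using inv_commute a by blast
next
  case (eng h1 h2)
  then have "h1 \<in> carrier G" "h2 \<in> carrier G"
    using generate_in_carrier[OF S] by auto
  then show ?case using eng a by (metis m_assoc)
qed

lemma (in group) generate_commute_generate:
  assumes S: "S \<subseteq> carrier G" and T: "T \<subseteq> carrier G"
    and comm: "\<And>s t. s \<in> S \<Longrightarrow> t \<in> T \<Longrightarrow> s \<otimes> t = t \<otimes> s"
    and a: "a \<in> generate G S" and b: "b \<in> generate G T"
  shows "a \<otimes> b = b \<otimes> a"
proof -
  have "t \<otimes> a = a \<otimes> t" if "t \<in> T" for t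
    using generate_commute[OF _ S _ a] comm that T by (metis subsetD)
  then show ?thesis
    using generate_commute[OF _ T _ b] a generate_in_carrier[OF S] by auto
qed

lemma (in group) generate_eq_one:
  "S \<subseteq> {\<one>} \<Longrightarrow> generate G S = {\<one>}"
  using mono_generate[of S "{\<one>}"] generate_one generate.one[of G S] by auto

lemma (in group) commutator_eq_one_iff:
  assumes "x \<in> carrier G" "y \<in> carrier G"
  shows "x \<otimes> y \<otimes> inv x \<otimes> inv y = \<one> \<longleftrightarrow> x \<otimes> y = y \<otimes> x"
proof -
  have "x \<otimes> y \<otimes> inv x \<otimes> inv y = (x \<otimes> y) \<otimes> inv (y \<otimes> x)"
    using assms by (simp add: m_assoc inv_mult_group)
  then show ?thesis
    using assms by (metis inv_closed inv_inv m_closed r_one m_assoc inv_equality r_inv)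
qed

lemma (in group) conj_int_pow:
  assumes g: "g \<in> carrier G" and a: "a \<in> carrier G"
  shows "g \<otimes> a [^] (n::int) \<otimes> inv g = (g \<otimes> a \<otimes> inv g) [^] n"
proof -
  have "(\<lambda>x. g \<otimes> x \<otimes> inv g) \<in> hom G G"
    using g by (intro homI) (simp_all add: m_assoc)
  then show ?thesis
    using hom_int_pow[OF _ a is_group is_group] by blast
qed

lemma (in group) conj_nat_pow_eq_pow_mult:
  assumes a: "a \<in> carrier G" and b: "b \<in> carrier G" and z: "z \<in> carrier G"
    and conj: "a \<otimes> b \<otimes> inv a = z \<otimes> b" and za: "z \<otimes> a = a \<otimes> z"
  shows "a [^] (n::nat) \<otimes> b \<otimes> inv (a [^] n) = z [^] n \<otimes> b"
proof (induction n)
  case 0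
  then show ?case using b by simp
next
  case (Suc n)
  have zan: "a [^] n \<otimes> z = z \<otimes> a [^] n"
    using group_commutes_pow[OF za[symmetric] a z] .
  have "a [^] Suc n \<otimes> b \<otimes> inv (a [^] Suc n) = a [^] n \<otimes> (a \<otimes> b \<otimes> inv a) \<otimes> inv (a [^] n)"
    using a b by (simp add: m_assoc inv_mult_group nat_pow_Suc2)
  also have "\<dots> = z \<otimes> (a [^] n \<otimes> b \<otimes> inv (a [^] n))"
    using conj zan a b z by (simp add: m_assoc[symmetric])
  also have "\<dots> = z \<otimes> z [^] n \<otimes> b"
    using Suc z b by (simp add: m_assoc)
  also have "\<dots> = z [^] Suc n \<otimes> b"
    using z by (metis nat_pow_Suc2)
  finally show ?case .
qed

lemma (in group) card_commuting_subgroups_dvd_order: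
  assumes A: "subgroup A G" and B: "subgroup B G" and disj: "A \<inter> B \<subseteq> {\<one>}"
    and comm: "\<And>a b. a \<in> A \<Longrightarrow> b \<in> B \<Longrightarrow> a \<otimes> b = b \<otimes> a"
  shows "card A * card B dvd order G"
proof -
  interpret group_disjoint_sum G A B
    using A B by (simp add: group_disjoint_sum_def is_group)
  let ?mult = "\<lambda>(x, y). x \<otimes> y"
  have carrier_prod: "carrier (subgroup_generated G A \<times>\<times> subgroup_generated G B) = A \<times> B"
    by (simp add: AG.carrier_subgroup_generated_subgroup BG.carrier_subgroup_generated_subgroup)
  have "?mult \<in> mon (subgroup_generated G A \<times>\<times> subgroup_generated G B) G"
    unfolding mon_group_mul_eq using disj comm by auto
  then have hom: "?mult \<in> hom (subgroup_generated G A \<times>\<times> subgroup_generated G B) G"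
    and inj: "inj_on ?mult (A \<times> B)"
    by (auto simp: mon_def carrier_prod)
  have "group_hom (subgroup_generated G A \<times>\<times> subgroup_generated G B) G ?mult"
    using hom by (simp add: group_hom_def group_hom_axioms_def DirProd_group)
  then have "subgroup (?mult ` (A \<times> B)) G"
    using group_hom.img_is_subgroup carrier_prod by fastforce
  then have "card (?mult ` (A \<times> B)) dvd order G"
    by (metis lagrange dvd_triv_right)
  then show ?thesis
    using card_image[OF inj] by (simp add: card_cartesian_product)
qed

lemma (in group) ord_mult_ord_dvd_order:
  assumes x: "x \<in> carrier G" and y: "y \<in> carrier G" and comm: "x \<otimes> y = y \<otimes> x"
    and disj: "generate G {x} \<inter> generate G {y} \<subseteq> {\<one>}"
  shows "ord x * ord y dvd order G"
proof -
  have A: "subgroup (generate G {x}) G" and B: "subgroup (generate G {y}) G"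
    using x y by (simp_all add: generate_is_subgroup)
  have "a \<otimes> b = b \<otimes> a" if "a \<in> generate G {x}" "b \<in> generate G {y}" for a b
    using generate_commute_generate[OF _ _ _ that] x y comm by blast
  then have "card (generate G {x}) * card (generate G {y}) dvd order G"
    by (rule card_commuting_subgroups_dvd_order[OF A B disj])
  then show ?thesis using generate_pow_card x y by simp
qed

lemma (in group) ord_mult_coprime:
  assumes x: "x \<in> carrier G" and y: "y \<in> carrier G" and comm: "x \<otimes> y = y \<otimes> x"
    and cop: "coprime (ord x) (ord y)"
  shows "ord (x \<otimes> y) = ord x * ord y"
proof (rule dvd_antisym)
  show "ord (x \<otimes> y) dvd ord x * ord y" by (rule ord_mul_divides[OF comm x y])
  let ?n = "ord (x \<otimes> y)"
  have ord_dvd: "ord a dvd ?n * ord b"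
    if a: "a \<in> carrier G" and b: "b \<in> carrier G" and ab: "a \<otimes> b = b \<otimes> a"
      and one: "a [^] ?n \<otimes> b [^] ?n = \<one>" for a b
  proof -
    have "a [^] ?n \<otimes> b [^] ?n = b [^] ?n \<otimes> a [^] ?n"
      using ab a b by (metis group_commutes_pow nat_pow_closed)
    then have "(a [^] ?n) [^] ord b \<otimes> (b [^] ?n) [^] ord b = (a [^] ?n \<otimes> b [^] ?n) [^] ord b"
      using pow_mult_distrib a b by (metis nat_pow_closed)
    also have "\<dots> = \<one>" using one by simp
    finally have "(a [^] ?n) [^] ord b \<otimes> (b [^] ?n) [^] ord b = \<one>" .
    moreover have "(b [^] ?n) [^] ord b = \<one>"
      using b by (metis nat_pow_pow mult.commute pow_ord_eq_1 nat_pow_one)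
    ultimately have "a [^] (?n * ord b) = \<one>"
      using a by (simp add: nat_pow_pow)
    then show ?thesis using a by (simp add: pow_eq_id)
  qed
  have one: "x [^] ?n \<otimes> y [^] ?n = \<one>"
    using pow_mult_distrib[OF comm x y] pow_ord_eq_1[of "x \<otimes> y"] x y by simp
  then have "y [^] ?n \<otimes> x [^] ?n = \<one>"
    using x y by (metis group_commutes_pow nat_pow_closed comm)
  then have "ord x dvd ?n" "ord y dvd ?n"
    using ord_dvd[OF x y comm one] ord_dvd[OF y x comm[symmetric]] cop
    by (simp_all add: coprime_dvd_mult_left_iff coprime_commute[of "ord x"])
  then show "ord x * ord y dvd ?n" using cop by (simp add: divides_mult)
qed

lemma (in group) pow_mem_subgroup_iff_dvd:
  assumes fin: "finite (carrier G)" and A: "subgroup A G" and h: "h \<in> carrier G"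
  obtains j :: nat where "j > 0" "\<And>r. h [^] r \<in> A \<longleftrightarrow> j dvd r"
proof -
  define j where "j = (LEAST j::nat. 0 < j \<and> h [^] j \<in> A)"
  have "0 < ord h \<and> h [^] ord h \<in> A"
    using ord_ge_1[OF fin h] subgroup.one_closed[OF A] h by simp
  then have j: "0 < j" "h [^] j \<in> A"
    unfolding j_def by (metis (mono_tags, lifting) LeastI)+
  have "h [^] r \<in> A \<longleftrightarrow> j dvd r" for r
  proof
    assume r: "h [^] r \<in> A"
    have "h [^] (j * (r div j)) \<in> A"
      using subgroup_int_pow_closed[OF A j(2), of "int (r div j)"] h
      by (simp add: int_pow_int nat_pow_pow)
    moreover have "h [^] r = h [^] (j * (r div j)) \<otimes> h [^] (r mod j)"
      using h by (simp add: nat_pow_mult)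
    then have "h [^] (r mod j) = inv (h [^] (j * (r div j))) \<otimes> h [^] r"
      using h by simp
    ultimately have "h [^] (r mod j) \<in> A"
      using r A by (simp add: subgroup.m_closed subgroup.m_inv_closed)
    then have "\<not> (0 < r mod j)"
      using j(1) not_less_Least[of "r mod j" "\<lambda>j. 0 < j \<and> h [^] j \<in> A"] unfolding j_def
      by (metis mod_less_divisor)
    then show "j dvd r" by (simp add: dvd_eq_mod_eq_0)
  next
    assume "j dvd r"
    then show "h [^] r \<in> A"
      using subgroup_int_pow_closed[OF A j(2), of "int (r div j)"] h
      by (simp add: int_pow_int nat_pow_pow)
  qed
  then show thesis using j(1) that by blast
qed

section \<open>Groups of squarefree order\<close>

lemma squarefree_mult_imp_coprime:
  fixes a b :: "'a :: semiring_gcd"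
  assumes "squarefree (a * b)"
  shows "coprime a b"
proof -
  have "gcd a b ^ 2 dvd a * b"
    by (simp add: power2_eq_square mult_dvd_mono)
  then show ?thesis
    using squarefreeD[OF assms] is_unit_gcd by blast
qed

lemma (in group) finite_carrier_if_squarefree_order:
  "squarefree (order G) \<Longrightarrow> finite (carrier G)"
  unfolding order_def using card.infinite by fastforce

lemma (in group) squarefree_order_central_commutator_imp_commute:
  assumes sf: "squarefree (order G)" and x: "x \<in> carrier G" and y: "y \<in> carrier G"
    and cx: "(x \<otimes> y \<otimes> inv x \<otimes> inv y) \<otimes> x = x \<otimes> (x \<otimes> y \<otimes> inv x \<otimes> inv y)"
    and cy: "(x \<otimes> y \<otimes> inv x \<otimes> inv y) \<otimes> y = y \<otimes> (x \<otimes> y \<otimes> inv x \<otimes> inv y)"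
  shows "x \<otimes> y = y \<otimes> x"
proof -
  define c where "c = x \<otimes> y \<otimes> inv x \<otimes> inv y"
  have fin: "finite (carrier G)" by (rule finite_carrier_if_squarefree_order[OF sf])
  have c: "c \<in> carrier G" unfolding c_def using x y by simp
  have "x \<otimes> y \<otimes> inv x = c \<otimes> y" unfolding c_def using x y by (simp add: m_assoc)
  then have conj: "x [^] n \<otimes> y \<otimes> inv (x [^] n) = c [^] n \<otimes> y" for n :: nat
    using conj_nat_pow_eq_pow_mult x y c cx unfolding c_def by blast
  have pow_c_eq_one: "c [^] n = \<one> \<longleftrightarrow> x [^] n \<otimes> y \<otimes> inv (x [^] n) = y" for n :: nat
    using conj[of n] c y by (metis l_one nat_pow_closed one_closed r_cancel)
  define d where "d = ord c"
  define e where "e = ord x div d"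
  have "d dvd ord x"
    unfolding d_def using pow_c_eq_one[of "ord x"] c x y by (simp add: pow_eq_id)
  then have de: "ord x = d * e" unfolding e_def by simp
  moreover have "squarefree (ord x)"
    using squarefree_mono[OF ord_dvd_group_order sf] x by simp
  ultimately have cop: "coprime d e" using squarefree_mult_imp_coprime by metis
  have "e \<noteq> 0" using de ord_ge_1[OF fin x] by auto
  define x1 where "x1 = x [^] e"
  have x1: "x1 \<in> carrier G" unfolding x1_def using x by simp
  have ord_x1: "ord x1 = d"
    unfolding x1_def using ord_pow[OF x _ \<open>e \<noteq> 0\<close>] de \<open>e \<noteq> 0\<close> by simp
  have comm: "x1 \<otimes> c = c \<otimes> x1"
    unfolding x1_def using group_commutes_pow[OF cx[folded c_def, symmetric] x c] .
  have disj: "generate G {x1} \<inter> generate G {c} \<subseteq> {\<one>}"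
  proof
    fix z assume z: "z \<in> generate G {x1} \<inter> generate G {c}"
    then obtain k :: nat where k: "z = x1 [^] k"
      using generate_pow_on_finite_carrier[OF fin x1] by auto
    have "z \<otimes> y = y \<otimes> z"
      using generate_commute[OF y _ _, of "{c}" z] z c cy unfolding c_def by auto
    then have "x [^] (e * k) \<otimes> y \<otimes> inv (x [^] (e * k)) = y"
      using k x x1_def y by (simp add: nat_pow_pow m_assoc)
    then have "d dvd e * k" unfolding d_def using pow_c_eq_one c by (simp add: pow_eq_id)
    then have "d dvd k" using cop by (simp add: coprime_dvd_mult_right_iff)
    then show "z \<in> {\<one>}" using k x1 ord_x1 by (simp add: pow_eq_id)
  qed
  have "d * d dvd order G"
    using ord_mult_ord_dvd_order[OF x1 c comm disj] ord_x1 d_def by simp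
  then have "d = 1" using squarefreeD[OF sf, of d] by (simp add: power2_eq_square)
  then show ?thesis
    using ord_eq_1[OF c] commutator_eq_one_iff[OF x y] unfolding d_def c_def by simp
qed

lemma (in comm_group) squarefree_order_ex_coprime_ord:
  assumes sf: "squarefree (order G)" and g: "g \<in> carrier G" and h: "h \<in> carrier G"
    and h_notin: "h \<notin> generate G {g}"
  shows "\<exists>h1 \<in> carrier G. ord h1 \<noteq> 1 \<and> coprime (ord g) (ord h1)"
proof -
  have fin: "finite (carrier G)" by (rule finite_carrier_if_squarefree_order[OF sf])
  have A: "subgroup (generate G {g}) G" using g by (simp add: generate_is_subgroup)
  (* j is the order of h modulo <g>; then h1 = h^(ord h / j) has order j and <h1> meets <g>
     trivially, as ord h is squarefree. *)
  obtain j :: nat where j: "j > 0" "\<And>r. h [^] r \<in> generate G {g} \<longleftrightarrow> j dvd r"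
    using pow_mem_subgroup_iff_dvd[OF fin A h] by metis
  have "j \<noteq> 1" using j(2)[of 1] h h_notin by auto
  have "j dvd ord h" using j(2)[of "ord h"] h generate.one by auto
  then obtain k where k: "ord h = j * k" by blast
  have "k \<noteq> 0" using k ord_ge_1[OF fin h] by auto
  have "squarefree (ord h)"
    using squarefree_mono[OF ord_dvd_group_order sf] h by simp
  then have cop: "coprime j k" using k squarefree_mult_imp_coprime by metis
  define h1 where "h1 = h [^] k"
  have h1: "h1 \<in> carrier G" unfolding h1_def using h by simp
  have ord_h1: "ord h1 = j"
    unfolding h1_def using ord_pow[OF h _ \<open>k \<noteq> 0\<close>] k \<open>k \<noteq> 0\<close> by simp
  have disj: "generate G {g} \<inter> generate G {h1} \<subseteq> {\<one>}"
  proof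
    fix z assume z: "z \<in> generate G {g} \<inter> generate G {h1}"
    then obtain a :: nat where a: "z = h1 [^] a"
      using generate_pow_on_finite_carrier[OF fin h1] by auto
    then have "j dvd k * a" using j(2) z h unfolding h1_def by (simp add: nat_pow_pow)
    then have "j dvd a" using cop by (simp add: coprime_dvd_mult_right_iff)
    then show "z \<in> {\<one>}" using a h1 ord_h1 by (simp add: pow_eq_id)
  qed
  have "ord g * ord h1 dvd order G"
    by (rule ord_mult_ord_dvd_order[OF g h1 m_comm[OF g h1] disj])
  then have "coprime (ord g) (ord h1)"
    using squarefree_mult_imp_coprime squarefree_mono[OF _ sf] by blast
  then show ?thesis using h1 ord_h1 \<open>j \<noteq> 1\<close> by blast
qed

lemma (in comm_group) squarefree_order_cyclic:
  assumes sf: "squarefree (order G)"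
  obtains g where "g \<in> carrier G" "carrier G = generate G {g}"
proof -
  have fin: "finite (carrier G)" by (rule finite_carrier_if_squarefree_order[OF sf])
  have "Max (ord ` carrier G) \<in> ord ` carrier G"
    using fin by (intro Max_in) auto
  then obtain g where g: "g \<in> carrier G" and g_Max: "ord g = Max (ord ` carrier G)"
    by (auto simp del: Max_in)
  have g_max: "ord x \<le> ord g" if "x \<in> carrier G" for x
    unfolding g_Max using fin that by (intro Max_ge) auto
  have "h \<in> generate G {g}" if h: "h \<in> carrier G" for h
  proof (rule ccontr)
    assume "h \<notin> generate G {g}"
    then obtain h1 where h1: "h1 \<in> carrier G" "ord h1 \<noteq> 1" "coprime (ord g) (ord h1)"
      using squarefree_order_ex_coprime_ord[OF sf g h] by blast
    then have "ord (g \<otimes> h1) = ord g * ord h1"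
      using ord_mult_coprime[OF g h1(1) m_comm[OF g h1(1)]] by simp
    moreover have "ord g * 2 \<le> ord g * ord h1" using h1 ord_ge_1[OF fin h1(1)] by simp
    ultimately show False
      using g_max[of "g \<otimes> h1"] ord_ge_1[OF fin g] g h1 by simp
  qed
  then show thesis
    using that g generate_incl[of "{g}"] by blast
qed

section \<open>Nilpotent groups and the Fitting subgroup\<close>

declare lower_central.simps(2) [simp del]

lemma (in group) lower_central_Suc:
  "lower_central G (Suc k) =
     generate G {h \<otimes> g \<otimes> inv h \<otimes> inv g | h g. h \<in> lower_central G k \<and> g \<in> carrier G}"
  by (simp add: lower_central.simps(2) commutator_subgroup_def)

lemma (in group) lower_central_subset_carrier: "lower_central G k \<subseteq> carrier G"
proof (induction k)
  case (Suc k)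
  then have "{h \<otimes> g \<otimes> inv h \<otimes> inv g | h g. h \<in> lower_central G k \<and> g \<in> carrier G} \<subseteq> carrier G"
    by auto
  then show ?case unfolding lower_central_Suc by (rule generate_incl)
qed simp

lemma (in group) lower_central_Suc_eq_one_iff:
  "lower_central G (Suc k) = {\<one>} \<longleftrightarrow>
     (\<forall>h \<in> lower_central G k. \<forall>g \<in> carrier G. h \<otimes> g = g \<otimes> h)"
proof
  assume triv: "lower_central G (Suc k) = {\<one>}"
  show "\<forall>h \<in> lower_central G k. \<forall>g \<in> carrier G. h \<otimes> g = g \<otimes> h"
  proof (intro ballI)
    fix h g assume h: "h \<in> lower_central G k" and g: "g \<in> carrier G"
    then have "h \<otimes> g \<otimes> inv h \<otimes> inv g \<in> lower_central G (Suc k)"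
      unfolding lower_central_Suc by (blast intro: generate.incl)
    then show "h \<otimes> g = g \<otimes> h"
      using triv commutator_eq_one_iff g h lower_central_subset_carrier by blast
  qed
next
  assume "\<forall>h \<in> lower_central G k. \<forall>g \<in> carrier G. h \<otimes> g = g \<otimes> h"
  then have "{h \<otimes> g \<otimes> inv h \<otimes> inv g | h g. h \<in> lower_central G k \<and> g \<in> carrier G} \<subseteq> {\<one>}"
    using commutator_eq_one_iff lower_central_subset_carrier by blast
  then show "lower_central G (Suc k) = {\<one>}"
    unfolding lower_central_Suc by (rule generate_eq_one)
qed

lemma (in group) nilpotent_squarefree_order_imp_commute:
  assumes nil: "nilpotent_group G" and sf: "squarefree (order G)"
    and x: "x \<in> carrier G" and y: "y \<in> carrier G"
  shows "x \<otimes> y = y \<otimes> x"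
proof -
  let ?L = "lower_central G"
  have descend: "?L (Suc k) = {\<one>}" if "?L (Suc (Suc k)) = {\<one>}" for k
  proof -
    have central: "z \<otimes> g = g \<otimes> z" if "z \<in> ?L (Suc k)" "g \<in> carrier G" for z g
      using \<open>?L (Suc (Suc k)) = {\<one>}\<close> that lower_central_Suc_eq_one_iff[of "Suc k"] by blast
    have "h \<otimes> g = g \<otimes> h" if h: "h \<in> ?L k" and g: "g \<in> carrier G" for h g
    proof (rule squarefree_order_central_commutator_imp_commute[OF sf _ g])
      show h': "h \<in> carrier G" using h lower_central_subset_carrier by blast
      have "h \<otimes> g \<otimes> inv h \<otimes> inv g \<in> ?L (Suc k)"
        using h g unfolding lower_central_Suc by (blast intro: generate.incl)
      then show "(h \<otimes> g \<otimes> inv h \<otimes> inv g) \<otimes> h = h \<otimes> (h \<otimes> g \<otimes> inv h \<otimes> inv g)"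
        and "(h \<otimes> g \<otimes> inv h \<otimes> inv g) \<otimes> g = g \<otimes> (h \<otimes> g \<otimes> inv h \<otimes> inv g)"
        using central h' g by auto
    qed
    then show ?thesis using lower_central_Suc_eq_one_iff[of k] by blast
  qed
  obtain n where "?L n = {\<one>}" using nil unfolding nilpotent_group_def by blast
  then have "?L (Suc n) = {\<one>}" using lower_central_Suc_eq_one_iff[of n] by simp
  then have "?L (Suc 0) = {\<one>}"
  proof (induction n)
    case (Suc n)
    then show ?case using descend by blast
  qed
  then show ?thesis using lower_central_Suc_eq_one_iff[of 0] x y by simp
qed

lemma (in group) nilpotent_groupI_central_commutators:
  assumes central: "\<And>x y z. x \<in> carrier G \<Longrightarrow> y \<in> carrier G \<Longrightarrow> z \<in> carrier G \<Longrightarrow>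
      (x \<otimes> y \<otimes> inv x \<otimes> inv y) \<otimes> z = z \<otimes> (x \<otimes> y \<otimes> inv x \<otimes> inv y)"
  shows "nilpotent_group G"
proof -
  let ?S = "{x \<otimes> y \<otimes> inv x \<otimes> inv y | x y. x \<in> carrier G \<and> y \<in> carrier G}"
  have "h \<otimes> g = g \<otimes> h" if h: "h \<in> lower_central G (Suc 0)" and g: "g \<in> carrier G" for h g
  proof (rule generate_commute[OF g])
    show "?S \<subseteq> carrier G" by blast
    show "s \<otimes> g = g \<otimes> s" if "s \<in> ?S" for s using that central g by blast
    show "h \<in> generate G ?S" using h by (simp add: lower_central_Suc)
  qed
  then have "lower_central G (Suc (Suc 0)) = {\<one>}"
    using lower_central_Suc_eq_one_iff[of "Suc 0"] by blast
  then show ?thesis unfolding nilpotent_group_def using is_group by blast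
qed

lemma (in group) fitting_subgroup_normal: "fitting_subgroup G \<lhd> G"
  unfolding fitting_subgroup_def
proof (rule normal_generateI)
  show "\<Union>{N. N \<lhd> G \<and> nilpotent_group (G\<lparr>carrier := N\<rparr>)} \<subseteq> carrier G"
    by (auto dest: normal_imp_subgroup subgroup.mem_carrier)
next
  fix h g
  assume "h \<in> \<Union>{N. N \<lhd> G \<and> nilpotent_group (G\<lparr>carrier := N\<rparr>)}" and "g \<in> carrier G"
  then show "g \<otimes> h \<otimes> inv g \<in> \<Union>{N. N \<lhd> G \<and> nilpotent_group (G\<lparr>carrier := N\<rparr>)}"
    by (auto dest: normal.inv_op_closed2)
qed

lemma (in group) nilpotent_normal_subset_fitting:
  "N \<lhd> G \<Longrightarrow> nilpotent_group (G\<lparr>carrier := N\<rparr>) \<Longrightarrow> N \<subseteq> fitting_subgroup G"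
  unfolding fitting_subgroup_def by (blast intro: generate.incl)

lemma (in group) nilpotent_normal_subgroup_commute:
  assumes sf: "squarefree (card (fitting_subgroup G))"
    and N: "N \<lhd> G" "nilpotent_group (G\<lparr>carrier := N\<rparr>)" and ab: "a \<in> N" "b \<in> N"
  shows "a \<otimes> b = b \<otimes> a"
proof -
  let ?F = "fitting_subgroup G"
  have F: "subgroup ?F G" by (rule normal_imp_subgroup[OF fitting_subgroup_normal])
  interpret F: group "G\<lparr>carrier := ?F\<rparr>" by (rule subgroup_imp_group[OF F])
  have N_sub: "subgroup N G" using N(1) by (rule normal_imp_subgroup)
  interpret N: group "G\<lparr>carrier := N\<rparr>" by (rule subgroup_imp_group[OF N_sub])
  have "subgroup N (G\<lparr>carrier := ?F\<rparr>)"
    using subgroup_incl[OF N_sub F nilpotent_normal_subset_fitting[OF N]] .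
  then have "card N dvd order (G\<lparr>carrier := ?F\<rparr>)"
    using F.lagrange by (metis dvd_triv_right)
  then have "squarefree (order (G\<lparr>carrier := N\<rparr>))"
    using squarefree_mono[OF _ sf] by (simp add: order_def)
  then show ?thesis
    using N.nilpotent_squarefree_order_imp_commute[OF N(2)] ab by simp
qed

lemma (in group) fitting_subgroup_commute:
  assumes sf: "squarefree (card (fitting_subgroup G))"
    and x: "x \<in> fitting_subgroup G" and y: "y \<in> fitting_subgroup G"
  shows "x \<otimes> y = y \<otimes> x"
proof -
  let ?F = "fitting_subgroup G"
  let ?U = "\<Union>{N. N \<lhd> G \<and> nilpotent_group (G\<lparr>carrier := N\<rparr>)}"
  have F: "subgroup ?F G" by (rule normal_imp_subgroup[OF fitting_subgroup_normal])
  interpret F: group "G\<lparr>carrier := ?F\<rparr>" by (rule subgroup_imp_group[OF F])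
  have U: "?U \<subseteq> carrier G" by (auto dest: normal_imp_subgroup subgroup.mem_carrier)
  have "a \<otimes> b = b \<otimes> a" if a: "a \<in> ?U" and b: "b \<in> ?U" for a b
  proof -
    obtain N1 where N1: "N1 \<lhd> G" "nilpotent_group (G\<lparr>carrier := N1\<rparr>)" "a \<in> N1"
      using a by blast
    obtain N2 where N2: "N2 \<lhd> G" "nilpotent_group (G\<lparr>carrier := N2\<rparr>)" "b \<in> N2"
      using b by blast
    interpret N1: normal N1 G by (rule N1(1))
    interpret N2: normal N2 G by (rule N2(1))
    have a': "a \<in> carrier G" and b': "b \<in> carrier G" using a b U by auto
    let ?c = "a \<otimes> b \<otimes> inv a \<otimes> inv b"
    have "?c = a \<otimes> (b \<otimes> inv a \<otimes> inv b)" using a' b' by (simp add: m_assoc)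
    moreover have "b \<otimes> inv a \<otimes> inv b \<in> N1"
      using N1.inv_op_closed2[OF b' N1.m_inv_closed[OF N1(3)]] .
    ultimately have c1: "?c \<in> N1" using N1.m_closed[OF N1(3)] by simp
    have "a \<otimes> b \<otimes> inv a \<in> N2" using N2.inv_op_closed2[OF a' N2(3)] .
    then have c2: "?c \<in> N2" using N2.m_closed N2.m_inv_closed[OF N2(3)] by blast
    have aF: "a \<in> ?F" and bF: "b \<in> ?F"
      using N1 N2 nilpotent_normal_subset_fitting by blast+
    have "a \<otimes>\<^bsub>G\<lparr>carrier := ?F\<rparr>\<^esub> b = b \<otimes>\<^bsub>G\<lparr>carrier := ?F\<rparr>\<^esub> a"
    proof (rule F.squarefree_order_central_commutator_imp_commute)
      show "squarefree (order (G\<lparr>carrier := ?F\<rparr>))" using sf by (simp add: order_def)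
    qed (use aF bF nilpotent_normal_subgroup_commute[OF sf N1(1,2) c1 N1(3)]
        nilpotent_normal_subgroup_commute[OF sf N2(1,2) c2 N2(3)]
        in \<open>simp_all add: m_inv_consistent[OF F]\<close>)
    then show ?thesis by simp
  qed
  then show ?thesis
    using generate_commute_generate[OF U U] x y unfolding fitting_subgroup_def by blast
qed

lemma (in group) fitting_subgroup_cyclic:
  assumes sf: "squarefree (card (fitting_subgroup G))"
  shows "cyclic_subgroup G (fitting_subgroup G)"
proof -
  let ?F = "fitting_subgroup G"
  have F: "subgroup ?F G" by (rule normal_imp_subgroup[OF fitting_subgroup_normal])
  interpret F: comm_group "G\<lparr>carrier := ?F\<rparr>"
    using subgroup_imp_group[OF F] fitting_subgroup_commute[OF sf]
    by (intro group.group_comm_groupI) auto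
  obtain z where z: "z \<in> ?F" and "?F = generate (G\<lparr>carrier := ?F\<rparr>) {z}"
    using F.squarefree_order_cyclic sf by (auto simp: order_def)
  then have "?F = generate G {z}" using generate_consistent[OF _ F] by simp
  then show ?thesis unfolding cyclic_subgroup_def using z by blast
qed

lemma (in group) centraliser_subgroup:
  assumes Nc: "N \<subseteq> carrier G"
  shows "subgroup (centraliser G N) G"
proof (rule subgroupI)
  show "centraliser G N \<subseteq> carrier G" "centraliser G N \<noteq> {}"
    using Nc by (auto simp: centraliser_def intro!: exI[of _ \<one>])
next
  fix x assume x: "x \<in> centraliser G N"
  have "inv x \<otimes> h = h \<otimes> inv x" if "h \<in> N" for h
    using x that Nc inv_commute unfolding centraliser_def by blast
  then show "inv x \<in> centraliser G N" using x by (auto simp: centraliser_def)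
next
  fix x y assume x: "x \<in> centraliser G N" and y: "y \<in> centraliser G N"
  have "x \<otimes> y \<otimes> h = h \<otimes> (x \<otimes> y)" if h: "h \<in> N" for h
  proof -
    have xy: "x \<in> carrier G" "y \<in> carrier G" and h': "h \<in> carrier G"
      using x y h Nc by (auto simp: centraliser_def)
    have "x \<otimes> y \<otimes> h = x \<otimes> (h \<otimes> y)"
      using y h xy h' by (simp add: m_assoc centraliser_def)
    also have "\<dots> = (x \<otimes> h) \<otimes> y" using xy h' by (simp add: m_assoc)
    also have "\<dots> = h \<otimes> (x \<otimes> y)"
      using x h xy h' by (simp add: m_assoc centraliser_def)
    finally show ?thesis .
  qed
  then show "x \<otimes> y \<in> centraliser G N" using x y by (auto simp: centraliser_def)
qed

lemma (in group) centraliser_normal: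
  assumes N: "N \<lhd> G"
  shows "centraliser G N \<lhd> G"
proof -
  have Nc: "N \<subseteq> carrier G" using N normal_imp_subgroup subgroup.subset by blast
  have "subgroup (centraliser G N) G" using centraliser_subgroup[OF Nc] .
  moreover have "g \<otimes> x \<otimes> inv g \<in> centraliser G N"
    if g: "g \<in> carrier G" and x: "x \<in> centraliser G N" for g x
  proof -
    have x': "x \<in> carrier G" using x by (simp add: centraliser_def)
    have "g \<otimes> x \<otimes> inv g \<otimes> h = h \<otimes> (g \<otimes> x \<otimes> inv g)" if h: "h \<in> N" for h
    proof -
      have h': "h \<in> carrier G" using h Nc by blast
      have "x \<otimes> (inv g \<otimes> h \<otimes> g) = (inv g \<otimes> h \<otimes> g) \<otimes> x"
        using x normal.inv_op_closed1[OF N g h] unfolding centraliser_def by blast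
      then have "g \<otimes> (x \<otimes> (inv g \<otimes> h \<otimes> g)) \<otimes> inv g = g \<otimes> ((inv g \<otimes> h \<otimes> g) \<otimes> x) \<otimes> inv g"
        by simp
      then show ?thesis using g h' x' by (simp add: m_assoc)
    qed
    then show ?thesis using g x' by (auto simp: centraliser_def)
  qed
  ultimately show ?thesis by (simp add: normal_inv_iff)
qed

lemma (in group) centralising_normal_subset_fitting:
  assumes N: "N \<lhd> G" and C: "N \<subseteq> centraliser G (fitting_subgroup G)"
    and derived: "derived G N \<subseteq> fitting_subgroup G"
  shows "N \<subseteq> fitting_subgroup G"
proof -
  have sub: "subgroup N G" by (rule normal_imp_subgroup[OF N])
  interpret N: group "G\<lparr>carrier := N\<rparr>" by (rule subgroup_imp_group[OF sub])
  have "(x \<otimes> y \<otimes> inv x \<otimes> inv y) \<otimes> z = z \<otimes> (x \<otimes> y \<otimes> inv x \<otimes> inv y)"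
    if xyz: "x \<in> N" "y \<in> N" "z \<in> N" for x y z
  proof -
    have "x \<otimes> y \<otimes> inv x \<otimes> inv y \<in> derived G N"
      unfolding derived_def using xyz by (blast intro: generate.incl)
    then have "x \<otimes> y \<otimes> inv x \<otimes> inv y \<in> fitting_subgroup G" using derived by blast
    moreover have "z \<in> centraliser G (fitting_subgroup G)" using xyz C by blast
    ultimately show ?thesis unfolding centraliser_def by simp
  qed
  then have "nilpotent_group (G\<lparr>carrier := N\<rparr>)"
    using N.nilpotent_groupI_central_commutators by (simp add: m_inv_consistent[OF sub])
  then show ?thesis by (rule nilpotent_normal_subset_fitting[OF N])
qed

lemma (in group) fitting_eq_centraliser:
  assumes sol: "solvable G" and sf: "squarefree (card (fitting_subgroup G))"
  shows "centraliser G (fitting_subgroup G) = fitting_subgroup G"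
proof
  let ?F = "fitting_subgroup G" and ?C = "centraliser G (fitting_subgroup G)"
  have F_sub: "?F \<subseteq> carrier G"
    using normal_imp_subgroup[OF fitting_subgroup_normal] subgroup.subset by blast
  show "?F \<subseteq> ?C"
    unfolding centraliser_def using F_sub fitting_subgroup_commute[OF sf] by auto
  define D where "D k = (derived G ^^ k) ?C" for k
  have D_normal: "D k \<lhd> G" for k
    unfolding D_def by (induction k) (simp_all add: centraliser_normal fitting_subgroup_normal
        derived_is_normal)
  have D_sub: "D k \<subseteq> ?C" for k
  proof (induction k)
    case (Suc k)
    have "D (Suc k) \<subseteq> D k"
      unfolding D_def
      using derived_incl[OF order_refl normal_imp_subgroup[OF D_normal[of k, unfolded D_def]]]
      by simp
    then show ?case using Suc by simp
  qed (simp add: D_def)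
  have descend: "D k \<subseteq> ?F" if "D (Suc k) \<subseteq> ?F" for k
    using centralising_normal_subset_fitting[OF D_normal D_sub] that by (simp add: D_def)
  obtain n where "(derived G ^^ n) (carrier G) = {\<one>}"
    using sol solvable_iff_trivial_derived_seq by blast
  moreover have "D n \<subseteq> (derived G ^^ n) (carrier G)"
    unfolding D_def by (rule mono_exp_of_derived) (auto simp: centraliser_def)
  ultimately have "D n \<subseteq> ?F"
    using subgroup.one_closed[OF normal_imp_subgroup[OF fitting_subgroup_normal]] by auto
  then have "D 0 \<subseteq> ?F"
  proof (induction n)
    case (Suc n)
    then show ?case using descend by blast
  qed
  then show "?C \<subseteq> ?F" by (simp add: D_def)
qed

section \<open>Cyclic normal subgroups\<close>

lemma (in group) cyclic_normal_conj_eq_pow: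
  assumes N: "N \<lhd> G" and cyc: "cyclic_subgroup G N" and g: "g \<in> carrier G"
  shows "\<exists>b :: int. \<forall>f \<in> N. g \<otimes> f \<otimes> inv g = f [^] b"
proof -
  obtain z where z: "z \<in> N" and N_eq: "N = generate G {z}"
    using cyc unfolding cyclic_subgroup_def by blast
  have z': "z \<in> carrier G" using subgroup.mem_carrier[OF normal_imp_subgroup[OF N] z] .
  have powers: "N = {z [^] k | k :: int. k \<in> UNIV}"
    using N_eq generate_pow[OF z'] by simp
  have "g \<otimes> z \<otimes> inv g \<in> N" using normal.inv_op_closed2[OF N g z] .
  then obtain b :: int where b: "g \<otimes> z \<otimes> inv g = z [^] b"
    unfolding powers by auto
  have "g \<otimes> f \<otimes> inv g = f [^] b" if "f \<in> N" for f
  proof -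
    obtain a :: int where a: "f = z [^] a" using \<open>f \<in> N\<close> unfolding powers by auto
    have "g \<otimes> f \<otimes> inv g = (g \<otimes> z \<otimes> inv g) [^] a" unfolding a by (rule conj_int_pow[OF g z'])
    also have "\<dots> = f [^] b" unfolding a b using z' by (simp add: int_pow_pow mult.commute)
    finally show ?thesis .
  qed
  then show ?thesis by blast
qed

(* Conjugations act on N as power maps, which commute; so g h and h g act alike on N and
   differ by an element of the centraliser. *)
lemma (in group) derived_subset_self_centralising_cyclic_normal:
  assumes N: "N \<lhd> G" and cyc: "cyclic_subgroup G N" and C: "centraliser G N \<subseteq> N"
  shows "derived G (carrier G) \<subseteq> N"
  unfolding derived_def
proof (rule generate_subgroup_incl[OF _ normal_imp_subgroup[OF N]])
  have N_sub: "N \<subseteq> carrier G" using N normal_imp_subgroup subgroup.subset by blast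
  have "g \<otimes> h \<otimes> inv g \<otimes> inv h \<in> N" if g: "g \<in> carrier G" and h: "h \<in> carrier G" for g h
  proof -
    obtain a :: int where a: "\<And>f. f \<in> N \<Longrightarrow> g \<otimes> f \<otimes> inv g = f [^] a"
      using cyclic_normal_conj_eq_pow[OF N cyc g] by blast
    obtain b :: int where b: "\<And>f. f \<in> N \<Longrightarrow> h \<otimes> f \<otimes> inv h = f [^] b"
      using cyclic_normal_conj_eq_pow[OF N cyc h] by blast
    have same_action: "(g \<otimes> h) \<otimes> f \<otimes> inv (g \<otimes> h) = (h \<otimes> g) \<otimes> f \<otimes> inv (h \<otimes> g)"
      if f: "f \<in> N" for f
    proof -
      have f': "f \<in> carrier G" using f N_sub by blast
      have "(g \<otimes> h) \<otimes> f \<otimes> inv (g \<otimes> h) = g \<otimes> (h \<otimes> f \<otimes> inv h) \<otimes> inv g"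
        using g h f' by (simp add: m_assoc inv_mult_group)
      also have "\<dots> = (g \<otimes> f \<otimes> inv g) [^] b" using b[OF f] conj_int_pow[OF g f'] by simp
      also have "\<dots> = f [^] (a * b)" using a[OF f] f' by (simp add: int_pow_pow)
      also have "\<dots> = (h \<otimes> f \<otimes> inv h) [^] a" using b[OF f] f' by (simp add: int_pow_pow mult.commute)
      also have "\<dots> = h \<otimes> (g \<otimes> f \<otimes> inv g) \<otimes> inv h" using a[OF f] conj_int_pow[OF h f'] by simp
      also have "\<dots> = (h \<otimes> g) \<otimes> f \<otimes> inv (h \<otimes> g)"
        using g h f' by (simp add: m_assoc inv_mult_group)
      finally show ?thesis .
    qed
    define w where "w = inv (h \<otimes> g) \<otimes> (g \<otimes> h)"
    have w: "w \<in> carrier G" unfolding w_def using g h by simp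
    have "w \<otimes> f = f \<otimes> w" if f: "f \<in> N" for f
    proof -
      have f': "f \<in> carrier G" using f N_sub by blast
      have "w \<otimes> f = inv (h \<otimes> g) \<otimes> ((g \<otimes> h) \<otimes> f \<otimes> inv (g \<otimes> h)) \<otimes> (g \<otimes> h)"
        unfolding w_def using g h f' by (simp add: m_assoc)
      also have "\<dots> = f \<otimes> w"
        unfolding same_action[OF f] w_def using g h f' by (simp add: m_assoc inv_mult_group)
      finally show ?thesis .
    qed
    then have "w \<in> centraliser G N" using w unfolding centraliser_def by blast
    then have "w \<in> N" using C by blast
    then have "(h \<otimes> g) \<otimes> w \<otimes> inv (h \<otimes> g) \<in> N"
      using normal.inv_op_closed2[OF N m_closed[OF h g]] by blast
    moreover have "(h \<otimes> g) \<otimes> w \<otimes> inv (h \<otimes> g) = g \<otimes> h \<otimes> inv g \<otimes> inv h"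
      unfolding w_def using g h by (simp add: m_assoc inv_mult_group)
    ultimately show ?thesis by (simp only:)
  qed
  then show "derived_set G (carrier G) \<subseteq> N" by blast
qed

section \<open>Permutation groups\<close>

lemma perm_group_carrier [simp]: "carrier (perm_group V G) = G"
  by (simp add: perm_group_def)

lemma perm_group_is_group:
  "subgroup G (BijGroup V) \<Longrightarrow> group (perm_group V G)"
  unfolding perm_group_def by (rule group.subgroup_imp_group[OF group_BijGroup])

lemma perm_group_action:
  assumes G: "subgroup G (BijGroup V)"
  shows "group_action (perm_group V G) V (\<lambda>g. g)"
proof -
  have "(\<lambda>g. g) \<in> hom (perm_group V G) (BijGroup V)"
    using subgroup.subset[OF G] by (auto simp: hom_def perm_group_def)
  then show ?thesis
    unfolding group_action_def group_hom_def group_hom_axioms_def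
    using perm_group_is_group[OF G] group_BijGroup by blast
qed

lemma perm_group_inv_apply:
  assumes G: "subgroup G (BijGroup V)" and g: "g \<in> G" and x: "x \<in> V"
  shows "(inv\<^bsub>perm_group V G\<^esub> g) (g x) = x" and "g ((inv\<^bsub>perm_group V G\<^esub> g) x) = x"
proof -
  let ?P = "perm_group V G"
  interpret group_action "perm_group V G" V "\<lambda>g. g" by (rule perm_group_action[OF G])
  interpret P: group "perm_group V G" by (rule perm_group_is_group[OF G])
  show "(inv\<^bsub>?P\<^esub> g) (g x) = x" using orbit_sym_aux g x by simp
  have "inv\<^bsub>?P\<^esub> g \<in> carrier ?P" using g P.inv_closed by simp
  then have "(inv\<^bsub>?P\<^esub> (inv\<^bsub>?P\<^esub> g)) ((inv\<^bsub>?P\<^esub> g) x) = x"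
    by (rule orbit_sym_aux[OF _ x refl])
  then show "g ((inv\<^bsub>?P\<^esub> g) x) = x" using g by simp
qed

lemma cyclic_normal_subgroup_semiregular:
  assumes G: "subgroup G (BijGroup V)" and trans: "vertex_transitive V G"
    and H: "H \<lhd> perm_group V G" and cyc: "cyclic_subgroup (perm_group V G) H"
  shows "semiregular V H"
  unfolding semiregular_def
proof (intro ballI impI)
  let ?P = "perm_group V G"
  interpret A: group_action "perm_group V G" V "\<lambda>g. g" by (rule perm_group_action[OF G])
  interpret P: group "perm_group V G" by (rule perm_group_is_group[OF G])
  fix v f assume v: "v \<in> V" and f: "f \<in> H" and f_fix: "f v = v"
  have f_G: "f \<in> G"
    using subgroup.mem_carrier[OF normal_imp_subgroup[OF H] f] by simp
  have "f w = w" if w: "w \<in> V" for w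
  proof -
    obtain g where g: "g \<in> G" and gv: "g v = w"
      using trans v w unfolding vertex_transitive_def by blast
    let ?g' = "inv\<^bsub>?P\<^esub> g"
    have g': "?g' \<in> G" using P.inv_closed g by simp
    obtain b :: int where "\<forall>f \<in> H. ?g' \<otimes>\<^bsub>?P\<^esub> f \<otimes>\<^bsub>?P\<^esub> inv\<^bsub>?P\<^esub> ?g' = f [^]\<^bsub>?P\<^esub> b"
      using P.cyclic_normal_conj_eq_pow[OF H cyc] g' by auto
    then have conj: "?g' \<otimes>\<^bsub>?P\<^esub> f \<otimes>\<^bsub>?P\<^esub> g = f [^]\<^bsub>?P\<^esub> b"
      using f g by simp
    have "f \<in> stabilizer ?P (\<lambda>g. g) v"
      using f_G f_fix by (simp add: stabilizer_def)
    then have "f [^]\<^bsub>?P\<^esub> b \<in> stabilizer ?P (\<lambda>g. g) v"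
      by (rule P.subgroup_int_pow_closed[OF A.stabilizer_subgroup[OF v]])
    then have "(?g' \<otimes>\<^bsub>?P\<^esub> f \<otimes>\<^bsub>?P\<^esub> g) v = v"
      unfolding conj by (simp add: stabilizer_def)
    moreover have "(?g' \<otimes>\<^bsub>?P\<^esub> f \<otimes>\<^bsub>?P\<^esub> g) v = ?g' (f w)"
      using A.composition_rule[of v "?g' \<otimes>\<^bsub>?P\<^esub> f" g]
        A.composition_rule[of w ?g' f] P.m_closed[of ?g' f] g g' f_G v w gv by simp
    ultimately have "?g' (f w) = v" by simp
    moreover have "f w \<in> V" using A.element_image[of f w "f w"] f_G w by simp
    ultimately show "f w = w"
      using perm_group_inv_apply(2)[OF G g] gv by metis
  qed
  moreover have "f \<in> extensional V"
    using f_G subgroup.subset[OF G] Bij_imp_extensional by (auto simp: BijGroup_def)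
  ultimately show "f = \<one>\<^bsub>BijGroup V\<^esub>"
    by (auto simp: BijGroup_def intro: extensionalityI)
qed

definition perm_orbit :: "('a \<Rightarrow> 'a) set \<Rightarrow> 'a \<Rightarrow> 'a set" where
  "perm_orbit H v = {h v | h. h \<in> H}"

lemma perm_orbits_eq_image: "perm_orbits V H = perm_orbit H ` V"
  by (simp add: perm_orbits_def perm_orbit_def)

lemma self_mem_perm_orbit:
  assumes N: "subgroup N (perm_group V G)" and x: "x \<in> V"
  shows "x \<in> perm_orbit N x"
proof -
  let ?P = "perm_group V G"
  have "\<one>\<^bsub>?P\<^esub> \<in> N" by (rule subgroup.one_closed[OF N])
  moreover have "x = \<one>\<^bsub>?P\<^esub> x" using x by (simp add: perm_group_def BijGroup_def)
  ultimately show ?thesis unfolding perm_orbit_def by blast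
qed

lemma perm_orbit_apply:
  assumes G: "subgroup G (BijGroup V)" and N: "subgroup N (perm_group V G)"
    and f: "f \<in> N" and x: "x \<in> V"
  shows "perm_orbit N (f x) = perm_orbit N x"
proof -
  let ?P = "perm_group V G"
  interpret A: group_action "perm_group V G" V "\<lambda>g. g" by (rule perm_group_action[OF G])
  interpret N: subgroup N "perm_group V G" by (rule N)
  have in_G: "h \<in> G" if "h \<in> N" for h using N.subset that by auto
  have apply_mult: "(k \<otimes>\<^bsub>?P\<^esub> h) y = k (h y)" if "k \<in> N" "h \<in> N" "y \<in> V" for k h y
    using A.composition_rule[of y k h] in_G that by simp
  let ?f' = "inv\<^bsub>?P\<^esub> f"
  have f': "?f' \<in> N" using N.m_inv_closed[OF f] .
  have fx: "f x \<in> V" using A.element_image[of f x "f x"] in_G[OF f] x by simp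
  have "k (f x) \<in> perm_orbit N x" if "k \<in> N" for k
    using apply_mult[OF that f x, symmetric] N.m_closed[OF that f] unfolding perm_orbit_def by blast
  moreover have "k x \<in> perm_orbit N (f x)" if "k \<in> N" for k
  proof -
    have "k x = (k \<otimes>\<^bsub>?P\<^esub> ?f') (f x)"
      using apply_mult[OF that f' fx] perm_group_inv_apply(1)[OF G in_G[OF f] x] by simp
    then show ?thesis using N.m_closed[OF that f'] unfolding perm_orbit_def by blast
  qed
  ultimately show ?thesis unfolding perm_orbit_def by blast
qed

section \<open>Graphs with a locally transitive group\<close>

lemma gdist_eq_1_iff:
  assumes sg: "simple_graph V E" and con: "connected_graph V E" and u: "u \<in> V" and v: "v \<in> V"
  shows "gdist V E u v = 1 \<longleftrightarrow> E u v"
proof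
  assume dist: "gdist V E u v = 1"
  obtain n where "walk_n E V n u v" using con u v unfolding connected_graph_def by blast
  then have "walk_n E V (gdist V E u v) u v" unfolding gdist_def by (rule LeastI)
  then show "E u v" using dist by simp
next
  assume "E u v"
  then have "walk_n E V 1 u v" and "\<not> walk_n E V 0 u v"
    using sg u v unfolding simple_graph_def by auto
  then show "gdist V E u v = 1"
    unfolding gdist_def
  proof (intro Least_equality)
    fix m assume "walk_n E V m u v" and "\<not> walk_n E V 0 u v"
    then show "1 \<le> m" by (cases m) auto
  qed
qed

lemma sphere_1_eq_neighbours:
  assumes "simple_graph V E" "connected_graph V E" "u \<in> V"
  shows "sphere V E 1 u = {v \<in> V. E u v}"
  using gdist_eq_1_iff[OF assms] by (auto simp: sphere_def)

lemma connected_graph_closed_subset: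
  assumes con: "connected_graph V E" and a: "a \<in> V" "a \<in> S"
    and closed: "\<And>x y. x \<in> S \<Longrightarrow> y \<in> V \<Longrightarrow> E x y \<Longrightarrow> y \<in> S"
  shows "V \<subseteq> S"
proof
  fix v assume v: "v \<in> V"
  have "v \<in> S" if "x \<in> S" "walk_n E V n x v" for n x
    using that by (induction n arbitrary: x) (auto intro: closed)
  then show "v \<in> S" using con a v unfolding connected_graph_def by blast
qed

lemma diameter_ge_2_obtains_edge:
  assumes con: "connected_graph V E" and diam: "diameter_ge V E 2"
  obtains a b where "a \<in> V" "b \<in> V" "E a b"
proof -
  obtain u v where u: "u \<in> V" and v: "v \<in> V" and "gdist V E u v \<ge> 2"
    using diam unfolding diameter_ge_def by blast
  moreover have "gdist V E u u = 0" using u unfolding gdist_def by (intro Least_eq_0) simp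
  ultimately have "u \<noteq> v" by auto
  obtain n where "walk_n E V n u v" using con u v unfolding connected_graph_def by blast
  with \<open>u \<noteq> v\<close> obtain w where "w \<in> V" "E u w" by (cases n) auto
  then show thesis using that u by blast
qed

(* From [g, h] (h g) = g h and g u = u: g moves h u exactly as the commutator [g, h] does. *)
lemma stabiliser_image_mem_perm_orbit:
  assumes G: "subgroup G (BijGroup V)" and trans: "vertex_transitive V G"
    and N: "subgroup N (perm_group V G)" and derived: "derived (perm_group V G) G \<subseteq> N"
    and g: "g \<in> G" "g u = u" and u: "u \<in> V" and w: "w \<in> V"
  shows "g w \<in> perm_orbit N w"
proof -
  let ?P = "perm_group V G"
  interpret A: group_action "perm_group V G" V "\<lambda>g. g" by (rule perm_group_action[OF G])
  interpret P: group "perm_group V G" by (rule perm_group_is_group[OF G])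
  obtain h where h: "h \<in> G" and hu: "h u = w"
    using trans u w unfolding vertex_transitive_def by blast
  define c where "c = g \<otimes>\<^bsub>?P\<^esub> h \<otimes>\<^bsub>?P\<^esub> inv\<^bsub>?P\<^esub> g \<otimes>\<^bsub>?P\<^esub> inv\<^bsub>?P\<^esub> h"
  have "c \<in> derived_set ?P G" unfolding c_def using g h by blast
  then have cN: "c \<in> N" using derived unfolding derived_def by (blast intro: generate.incl)
  have c: "c \<in> G" using subgroup.subset[OF N] cN by auto
  have "g \<in> carrier ?P" "h \<in> carrier ?P" using g h by simp_all
  then have "c \<otimes>\<^bsub>?P\<^esub> (h \<otimes>\<^bsub>?P\<^esub> g) = g \<otimes>\<^bsub>?P\<^esub> h"
    unfolding c_def by (simp add: P.m_assoc del: perm_group_carrier)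
  then have "c (h (g u)) = g (h u)"
    using A.composition_rule[of u c "h \<otimes>\<^bsub>?P\<^esub> g"] A.composition_rule[of u h g]
      A.composition_rule[of u g h] P.m_closed[of h g] c g h u by simp
  then have "g w = c w" using g hu by simp
  then show ?thesis using cN unfolding perm_orbit_def by blast
qed

lemma neighbours_mem_perm_orbit:
  assumes G: "subgroup G (BijGroup V)" and trans: "vertex_transitive V G"
    and local_trans: "\<And>u. u \<in> V \<Longrightarrow> stab_transitive_on G u {v \<in> V. E u v}"
    and N: "subgroup N (perm_group V G)" and derived: "derived (perm_group V G) G \<subseteq> N"
    and x: "x \<in> V" and w: "w \<in> V" "E x w" and v: "v \<in> V" "E x v"
  shows "v \<in> perm_orbit N w"
proof -
  obtain g where "g \<in> G" "g x = x" "g w = v"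
    using local_trans[OF x] w v unfolding stab_transitive_on_def by blast
  then show ?thesis
    using stabiliser_image_mem_perm_orbit[OF G trans N derived _ _ x w(1)] by blast
qed

lemma card_perm_orbits_le_2:
  assumes G: "subgroup G (BijGroup V)" and aut: "G \<subseteq> Aut V E" and trans: "vertex_transitive V G"
    and local_trans: "\<And>u. u \<in> V \<Longrightarrow> stab_transitive_on G u {v \<in> V. E u v}"
    and sg: "simple_graph V E" and con: "connected_graph V E"
    and N: "subgroup N (perm_group V G)" and derived: "derived (perm_group V G) G \<subseteq> N"
    and a: "a \<in> V" and b: "b \<in> V" and ab: "E a b"
  shows "card (perm_orbits V N) \<le> 2"
proof -
  interpret A: group_action "perm_group V G" V "\<lambda>g. g" by (rule perm_group_action[OF G])
  let ?O = "perm_orbit N"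
  have in_G: "f \<in> G" if "f \<in> N" for f using subgroup.subset[OF N] that by auto
  have image: "f x \<in> V" if "f \<in> N" "x \<in> V" for f x
    using A.element_image[of f x "f x"] in_G that by simp
  have shift: "y \<in> ?O z" if f: "f \<in> N" and x: "x \<in> V" and z: "z \<in> V" "E x z"
    and y: "y \<in> V" "E (f x) y" for f x z y
  proof -
    have "E (f x) (f z)" using aut in_G[OF f] x z unfolding Aut_def by blast
    then have "y \<in> ?O (f z)"
      using neighbours_mem_perm_orbit[OF G trans local_trans N derived image[OF f x]]
        image[OF f z(1)] y by blast
    then show ?thesis using perm_orbit_apply[OF G N f z(1)] by simp
  qed
  have ba: "E b a" using sg a b ab unfolding simple_graph_def by blast
  have "V \<subseteq> ?O a \<union> ?O b"
  proof (rule connected_graph_closed_subset[OF con a])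
    show "a \<in> ?O a \<union> ?O b" using self_mem_perm_orbit[OF N a] by blast
    fix x y assume x: "x \<in> ?O a \<union> ?O b" and y: "y \<in> V" "E x y"
    from x obtain f where "f \<in> N" and "x = f a \<or> x = f b" unfolding perm_orbit_def by blast
    then show "y \<in> ?O a \<union> ?O b" using shift[OF _ a b ab] shift[OF _ b a ba] y by blast
  qed
  have "perm_orbits V N \<subseteq> {?O a, ?O b}"
  proof
    fix orb assume "orb \<in> perm_orbits V N"
    then obtain v where "v \<in> V" and orb: "orb = ?O v" unfolding perm_orbits_eq_image by blast
    then obtain f where "f \<in> N" and "v = f a \<or> v = f b"
      using \<open>V \<subseteq> ?O a \<union> ?O b\<close> unfolding perm_orbit_def by blast
    then show "orb \<in> {?O a, ?O b}"
      using orb perm_orbit_apply[OF G N _ a] perm_orbit_apply[OF G N _ b] by auto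
  qed
  moreover have "card {?O a, ?O b} \<le> 2" by (cases "?O a = ?O b") auto
  ultimately show ?thesis by (meson card_mono finite.emptyI finite.insertI le_trans)
qed

theorem lemma4p5:
  fixes V :: "'a set" and E :: "'a \<Rightarrow> 'a \<Rightarrow> bool" and G :: "('a \<Rightarrow> 'a) set"
  assumes "finite V"
    and "simple_graph V E"
    and "connected_graph V E"
    and "two_distance_transitive V E G"
    and "squarefree (card V)"
    and "solvable (perm_group V G)"
    and "squarefree (card (fitting_subgroup (perm_group V G)))"
  shows "fitting_subgroup (perm_group V G) = centraliser (perm_group V G) (fitting_subgroup (perm_group V G))
    \<and> cyclic_subgroup (perm_group V G) (fitting_subgroup (perm_group V G))
    \<and> ((\<exists>m b. iso_complete_multipartite V E m b \<and> m \<ge> 3 \<and> b \<ge> 2 \<and> squarefree (m * b))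
       \<or> (semiregular V (fitting_subgroup (perm_group V G))
          \<and> card (perm_orbits V (fitting_subgroup (perm_group V G))) \<le> 2))"
proof -
  let ?P = "perm_group V G" and ?F = "fitting_subgroup (perm_group V G)"
  have G: "subgroup G (BijGroup V)" and aut: "G \<subseteq> Aut V E" and diam: "diameter_ge V E 2"
    and trans: "vertex_transitive V G"
    and local_trans: "\<And>u. u \<in> V \<Longrightarrow> stab_transitive_on G u (sphere V E 1 u)"
    using assms(4) unfolding two_distance_transitive_def by auto
  interpret P: group ?P by (rule perm_group_is_group[OF G])
  have F_eq: "centraliser ?P ?F = ?F" by (rule P.fitting_eq_centraliser[OF assms(6,7)])
  have cyc: "cyclic_subgroup ?P ?F" by (rule P.fitting_subgroup_cyclic[OF assms(7)])
  have "derived ?P G \<subseteq> ?F"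
    using P.derived_subset_self_centralising_cyclic_normal[OF P.fitting_subgroup_normal cyc] F_eq
    by simp
  moreover obtain a b where "a \<in> V" "b \<in> V" "E a b"
    by (rule diameter_ge_2_obtains_edge[OF assms(3) diam])
  ultimately have "card (perm_orbits V ?F) \<le> 2"
    using card_perm_orbits_le_2[OF G aut trans _ assms(2,3)
        normal_imp_subgroup[OF P.fitting_subgroup_normal]]
      local_trans sphere_1_eq_neighbours[OF assms(2,3)] by simp
  moreover have "semiregular V ?F"
    by (rule cyclic_normal_subgroup_semiregular[OF G trans P.fitting_subgroup_normal cyc])
  ultimately show ?thesis using F_eq cyc by simp
qed

end
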